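(* Let $-A$ be the generator of a $C_0$-semigroup $(T(t))_{t\ge0}$ on a Banach space $X$. Suppose there exist $\alpha,\beta\in\mathbb N_0$, $\eta\in\rho(-A)$ and a sequence $(t_n)_{n\in\mathbb N}\subseteq[0,\infty)$ such that \[ \lim_{n\to\infty}\|T(t_n)A^\alpha(\eta+A)^{-\alpha-\beta}\|_{\mathcal L(X)}=0. \] Then $\overline{\mathbb C_-}\setminus\{0\}\subseteq\rho(A)$.
   Context: All Banach spaces are complex; $\mathbb C_-=\{\lambda\in\mathbb C:\Re\lambda<0\}$. *)

theory Defs
  imports "HOL-Analysis.Analysis"
begin

class complex_banach = banach +
  fixes cscale :: "complex \<Rightarrow> 'a \<Rightarrow> 'a"
  assumes cscale_of_real: "cscale (complex_of_real r) x = r *\<^sub>R x"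
    and cscale_add_left: "cscale (a + b) x = cscale a x + cscale b x"
    and cscale_add_right: "cscale a (x + y) = cscale a x + cscale a y"
    and cscale_mult: "cscale (a * b) x = cscale a (cscale b x)"
    and norm_cscale: "norm (cscale a x) = cmod a * norm x"

definition bounded_clinear_op :: "('a::complex_banach \<Rightarrow> 'a) \<Rightarrow> bool" where
  "bounded_clinear_op f \<longleftrightarrow> bounded_linear f \<and> (\<forall>c x. f (cscale c x) = cscale c (f x))"

definition C0_semigroup :: "(real \<Rightarrow> 'a::complex_banach \<Rightarrow> 'a) \<Rightarrow> bool" where
  "C0_semigroup T \<longleftrightarrow>
     (\<forall>t\<ge>0. bounded_clinear_op (T t)) \<and> T 0 = id \<and>
     (\<forall>s\<ge>0. \<forall>t\<ge>0. T (s + t) = T s \<circ> T t) \<and>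
     (\<forall>x. ((\<lambda>t. T t x) \<longlongrightarrow> x) (at_right 0))"

definition gen_dom :: "(real \<Rightarrow> 'a::real_normed_vector \<Rightarrow> 'a) \<Rightarrow> 'a set" where
  "gen_dom T = {x. \<exists>y. ((\<lambda>h. (1 / h) *\<^sub>R (T h x - x)) \<longlongrightarrow> y) (at_right 0)}"

definition gen :: "(real \<Rightarrow> 'a::real_normed_vector \<Rightarrow> 'a) \<Rightarrow> 'a \<Rightarrow> 'a" where
  "gen T x = Lim (at_right 0) (\<lambda>h. (1 / h) *\<^sub>R (T h x - x))"

definition resolvent :: "'a set \<Rightarrow> ('a::complex_banach \<Rightarrow> 'a) \<Rightarrow> complex \<Rightarrow> 'a \<Rightarrow> 'a" where
  "resolvent D B l = the_inv_into D (\<lambda>x. cscale l x - B x)"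

definition resolvent_set :: "'a set \<Rightarrow> ('a::complex_banach \<Rightarrow> 'a) \<Rightarrow> complex set" where
  "resolvent_set D B = {l. bij_betw (\<lambda>x. cscale l x - B x) D UNIV \<and>
                             bounded_clinear_op (resolvent D B l)}"

end

theory Submission
  imports Defs
begin

text \<open>Write G for the generator of T, so that A = -G, and R for the resolvent of G at \<eta>.
  Fix \<mu> \<noteq> 0 with Re \<mu> \<ge> 0; we show that \<mu> - G is invertible, which is only news if
  \<mu> \<noteq> \<eta>. The operator S = A^\<alpha> R^(\<alpha>+\<beta>) = (AR)^\<alpha> R^\<beta> satisfies c - S = (\<mu> - G) W
  for the nonzero number c = (\<mu>/(\<mu> - \<eta>))^\<alpha> (\<eta> - \<mu>)^(-\<beta>) and a bounded W with values in
  the domain, because R and AR satisfy identities of this kind and such identities multiply.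
  The integrals B_t = integral of e^(\<mu>(t-s)) T(s) over [0,t] satisfy (\<mu> - G) B_t = e^(\<mu>t) - T(t).
  Hence (\<mu> - G)(e^(\<mu>t) W + B_t S) = e^(\<mu>t) c - T(t) S, and the right-hand side is invertible by
  the contraction principle as soon as the norm of T(t) S is below |c| \<le> |e^(\<mu>t) c|, which
  happens along the sequence t_n. This gives a bounded right inverse of \<mu> - G. An eigenvector
  G x = \<mu> x would give T(t) S x = e^(\<mu>t) c x, which is impossible for the same t unless x = 0.\<close>

section \<open>Complex scalar multiplication and bounded complex-linear operators\<close>

lemma cscale_zero_left [simp]: "cscale 0 x = 0"
  using cscale_of_real[of 0 x] by simp

lemma cscale_one [simp]: "cscale 1 x = x"
  using cscale_of_real[of 1 x] by simp

lemma cscale_zero_right [simp]: "cscale a 0 = 0"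
  using cscale_add_right[of a 0 0] by simp

lemma cscale_minus_right: "cscale a (- x) = - cscale a x"
  using cscale_add_right[of a x "- x"] by (simp add: eq_neg_iff_add_eq_0 add.commute)

lemma cscale_diff_right: "cscale a (x - y) = cscale a x - cscale a y"
  using cscale_add_right[of a x "- y"] by (simp add: cscale_minus_right)

lemma cscale_minus_left: "cscale (- a) x = - cscale a x"
  using cscale_add_left[of a "- a" x] by (simp add: eq_neg_iff_add_eq_0 add.commute)

lemma cscale_diff_left: "cscale (a - b) x = cscale a x - cscale b x"
  using cscale_add_left[of a "- b" x] by (simp add: cscale_minus_left)

lemma cscale_scaleR_right: "cscale a (r *\<^sub>R x) = r *\<^sub>R cscale a x"
  by (metis cscale_mult cscale_of_real mult.commute)

lemma cscale_scaleR_left: "cscale (r *\<^sub>R a) x = r *\<^sub>R cscale a x"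
  by (metis cscale_mult cscale_of_real scaleR_conv_of_real)

lemma cscale_commute: "cscale a (cscale b x) = cscale b (cscale a x)"
  by (metis cscale_mult mult.commute)

lemma bounded_linear_cscale: "bounded_linear (cscale a)"
  by (rule bounded_linear_intro[where K = "cmod a"])
    (auto simp: cscale_add_right cscale_scaleR_right norm_cscale)

lemma bounded_bilinear_cscale: "bounded_bilinear cscale"
  by (rule bounded_bilinear.intro)
    (auto simp: cscale_add_right cscale_add_left cscale_scaleR_right cscale_scaleR_left norm_cscale
      intro!: exI[of _ 1])

lemma bounded_clinear_op_bounded_linear: "bounded_clinear_op f \<Longrightarrow> bounded_linear f"
  by (simp add: bounded_clinear_op_def)

lemma bounded_clinear_op_apply_cscale: "bounded_clinear_op f \<Longrightarrow> f (cscale a x) = cscale a (f x)"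
  by (simp add: bounded_clinear_op_def)

lemma bounded_clinear_op_apply_add: "bounded_clinear_op f \<Longrightarrow> f (x + y) = f x + f y"
  by (simp add: bounded_clinear_op_def linear_simps)

lemma bounded_clinear_op_apply_diff: "bounded_clinear_op f \<Longrightarrow> f (x - y) = f x - f y"
  by (simp add: bounded_clinear_op_def linear_simps)

lemma bounded_clinear_op_apply_zero: "bounded_clinear_op f \<Longrightarrow> f 0 = 0"
  by (simp add: bounded_clinear_op_def linear_simps)

lemma bounded_clinear_opI:
  assumes "\<And>x y. f (x + y) = f x + f y" and "\<And>c x. f (cscale c x) = cscale c (f x)"
    and "\<And>x. norm (f x) \<le> K * norm x"
  shows "bounded_clinear_op f"
proof -
  have "bounded_linear f"
  proof (rule bounded_linear_intro[where K = K])
    show "f (r *\<^sub>R x) = r *\<^sub>R f x" for r x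
      using assms(2)[of "of_real r" x] by (simp add: cscale_of_real)
  qed (use assms in \<open>auto simp: mult.commute\<close>)
  then show ?thesis
    using assms(2) by (simp add: bounded_clinear_op_def)
qed

lemma bounded_clinear_op_ident: "bounded_clinear_op (\<lambda>x. x)"
  by (simp add: bounded_clinear_op_def bounded_linear_ident)

lemma bounded_clinear_op_zero: "bounded_clinear_op (\<lambda>x. 0)"
  by (simp add: bounded_clinear_op_def bounded_linear_zero)

lemma bounded_clinear_op_compose:
  "bounded_clinear_op f \<Longrightarrow> bounded_clinear_op g \<Longrightarrow> bounded_clinear_op (\<lambda>x. f (g x))"
  unfolding bounded_clinear_op_def using bounded_linear_compose by auto

lemma bounded_clinear_op_add:
  "bounded_clinear_op f \<Longrightarrow> bounded_clinear_op g \<Longrightarrow> bounded_clinear_op (\<lambda>x. f x + g x)"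
  unfolding bounded_clinear_op_def using bounded_linear_add by (auto simp: cscale_add_right)

lemma bounded_clinear_op_diff:
  "bounded_clinear_op f \<Longrightarrow> bounded_clinear_op g \<Longrightarrow> bounded_clinear_op (\<lambda>x. f x - g x)"
  unfolding bounded_clinear_op_def using bounded_linear_sub by (auto simp: cscale_diff_right)

lemma bounded_clinear_op_cscale:
  "bounded_clinear_op f \<Longrightarrow> bounded_clinear_op (\<lambda>x. cscale a (f x))"
  unfolding bounded_clinear_op_def
  using bounded_linear_compose[OF bounded_linear_cscale] by (auto simp: cscale_commute)

lemma bounded_clinear_op_funpow: "bounded_clinear_op f \<Longrightarrow> bounded_clinear_op (f ^^ n)"
  by (induction n) (simp_all add: id_def comp_def bounded_clinear_op_ident bounded_clinear_op_compose)

lemma funpow_eigenvector: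
  assumes "bounded_clinear_op K" and "K x = cscale r x"
  shows "(K ^^ n) x = cscale (r ^ n) x"
proof (induction n)
  case (Suc n)
  then show ?case
    using assms by (simp add: bounded_clinear_op_apply_cscale cscale_mult[symmetric] mult.commute)
qed simp

section \<open>Uniform boundedness\<close>

lemma bounded_linear_bound_from_ball:
  fixes F :: "'a::real_normed_vector \<Rightarrow> 'b::real_normed_vector"
  assumes lin: "bounded_linear F" and r: "r > 0" and bound: "\<And>z. z \<in> ball x0 r \<Longrightarrow> norm (F z) \<le> k"
  shows "norm (F y) \<le> (4 * k / r) * norm y"
proof (cases "y = 0")
  case True
  then show ?thesis
    using lin by (simp add: linear_simps)
next
  case False
  define z where "z = (r / 2 / norm y) *\<^sub>R y"
  have "norm z = r / 2"
    using False r by (simp add: z_def)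
  then have "norm (F (x0 + z)) \<le> k" and "norm (F x0) \<le> k"
    using r by (auto simp: dist_norm intro!: bound)
  moreover have "F z = F (x0 + z) - F x0"
    using lin by (simp add: linear_simps)
  ultimately have Fz: "norm (F z) \<le> 2 * k"
    using norm_triangle_ineq4[of "F (x0 + z)" "F x0"] by simp
  have "y = (2 * norm y / r) *\<^sub>R z"
    using False r by (simp add: z_def)
  then have "norm (F y) = (2 * norm y / r) * norm (F z)"
    using lin r by (metis linear_simps(5) norm_scaleR abs_of_nonneg divide_nonneg_pos
        mult_nonneg_nonneg norm_ge_zero zero_le_numeral less_imp_le)
  also have "\<dots> \<le> (2 * norm y / r) * (2 * k)"
    using Fz r by (intro mult_left_mono) auto
  finally show ?thesis
    by (simp add: field_simps)
qed

theorem uniform_boundedness: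
  fixes F :: "nat \<Rightarrow> 'a::banach \<Rightarrow> 'b::real_normed_vector"
  assumes lin: "\<And>n. bounded_linear (F n)" and pointwise: "\<And>x. \<exists>C. \<forall>n. norm (F n x) \<le> C"
  shows "\<exists>C. \<forall>n x. norm (F n x) \<le> C * norm x"
proof -
  define E where "E k = {x. \<forall>n. norm (F n x) \<le> real k}" for k :: nat
  have closed_E: "closed (E k)" for k
  proof -
    have "E k = (\<Inter>n. {x. norm (F n x) \<le> real k})"
      by (auto simp: E_def)
    then show ?thesis
      by (auto intro!: closed_Collect_le continuous_intros bounded_linear.continuous_on[OF lin])
  qed
  have "x \<in> (\<Union>k. E k)" for x
  proof -
    obtain C where "\<forall>n. norm (F n x) \<le> C"
      using pointwise by blast
    moreover obtain k where "C \<le> real k"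
      using real_arch_simple by blast
    ultimately show ?thesis
      unfolding E_def using order_trans by blast
  qed
  then have "interior (\<Union>k. E k) \<noteq> {}"
    by (metis UNIV_I empty_iff interior_UNIV subsetI subset_antisym subset_UNIV)
  then have "\<exists>k. interior (E k) \<noteq> {}"
  proof (rule contrapos_np)
    assume "\<not> (\<exists>k. interior (E k) \<noteq> {})"
    then show "interior (\<Union>k. E k) = {}"
      using Baire_category_alt[of euclidean "range E"] completely_metrizable_space_euclidean
        closed_E by (simp add: closed_closedin[symmetric]) blast
  qed
  then obtain k x0 where "x0 \<in> interior (E k)"
    by blast
  then obtain r where "r > 0" and "ball x0 r \<subseteq> E k"
    by (meson open_contains_ball_eq open_interior interior_subset subset_trans)
  then have "norm (F n y) \<le> (4 * real k / r) * norm y" for n y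
    by (intro bounded_linear_bound_from_ball[OF lin]) (auto simp: E_def)
  then show ?thesis
    by blast
qed

section \<open>Resolvent sets and small perturbations of scalars\<close>

lemma resolvent_set_inj_on:
  "l \<in> resolvent_set D B \<Longrightarrow> inj_on (\<lambda>x. cscale l x - B x) D"
  by (simp add: resolvent_set_def bij_betw_def)

lemma resolvent_set_image:
  "l \<in> resolvent_set D B \<Longrightarrow> (\<lambda>x. cscale l x - B x) ` D = UNIV"
  by (simp add: resolvent_set_def bij_betw_def)

lemma resolvent_in_dom:
  assumes "l \<in> resolvent_set D B"
  shows "resolvent D B l y \<in> D"
  unfolding resolvent_def
  using the_inv_into_into[OF resolvent_set_inj_on[OF assms], of y D] resolvent_set_image[OF assms]
  by auto

lemma resolvent_right_inverse:
  assumes "l \<in> resolvent_set D B"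
  shows "cscale l (resolvent D B l y) - B (resolvent D B l y) = y"
  unfolding resolvent_def
  using f_the_inv_into_f[OF resolvent_set_inj_on[OF assms], of y] resolvent_set_image[OF assms]
  by auto

lemma resolvent_left_inverse:
  assumes "l \<in> resolvent_set D B" and "x \<in> D"
  shows "resolvent D B l (cscale l x - B x) = x"
  unfolding resolvent_def by (rule the_inv_into_f_f[OF resolvent_set_inj_on[OF assms(1)] assms(2)])

lemma resolvent_bounded_clinear_op:
  "l \<in> resolvent_set D B \<Longrightarrow> bounded_clinear_op (resolvent D B l)"
  by (simp add: resolvent_set_def)

lemma resolvent_setI:
  assumes inj: "inj_on (\<lambda>x. cscale l x - B x) D" and Z: "bounded_clinear_op Z"
    and Z_in: "\<And>y. Z y \<in> D" and Z_inverse: "\<And>y. cscale l (Z y) - B (Z y) = y"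
  shows "l \<in> resolvent_set D B"
proof -
  let ?f = "\<lambda>x. cscale l x - B x"
  have "y \<in> ?f ` D" for y
    using image_eqI[of y ?f "Z y" D] Z_inverse Z_in by simp
  then have "bij_betw ?f D UNIV"
    using inj by (auto simp: bij_betw_def)
  moreover have "resolvent D B l = Z"
    using the_inv_into_f_f[OF inj Z_in] by (simp add: fun_eq_iff resolvent_def Z_inverse)
  ultimately show ?thesis
    using Z by (simp add: resolvent_set_def)
qed

lemma resolvent_set_uminus:
  assumes "l \<in> resolvent_set D B"
  shows "- l \<in> resolvent_set D (\<lambda>y. - B y)"
proof (rule resolvent_setI)
  have eq: "cscale (- l) x - - B x = - (cscale l x - B x)" for x
    by (simp add: cscale_minus_left)
  have "inj_on (uminus \<circ> (\<lambda>x. cscale l x - B x)) D"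
    using assms by (intro comp_inj_on) (auto simp: resolvent_set_def bij_betw_def)
  then show "inj_on (\<lambda>x. cscale (- l) x - - B x) D"
    unfolding eq comp_def .
  show "bounded_clinear_op (\<lambda>y. resolvent D B l (cscale (- 1) y))"
    using bounded_clinear_op_compose[OF resolvent_bounded_clinear_op[OF assms]
        bounded_clinear_op_cscale[OF bounded_clinear_op_ident]] .
  show "resolvent D B l (cscale (- 1) y) \<in> D" for y
    using assms by (rule resolvent_in_dom)
  show "cscale (- l) (resolvent D B l (cscale (- 1) y)) - - B (resolvent D B l (cscale (- 1) y)) = y" for y
    using resolvent_right_inverse[OF assms, of "cscale (- 1) y"]
    by (simp add: cscale_minus_left) (metis minus_diff_eq minus_minus)
qed

lemma bounded_clinear_op_right_inverse:
  fixes f :: "'a::complex_banach \<Rightarrow> 'a"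
  assumes add: "\<And>x y. f (x + y) = f x + f y" and scale: "\<And>c x. f (cscale c x) = cscale c (f x)"
    and "surj f" and c: "c > 0" and below: "\<And>x. c * norm x \<le> norm (f x)"
  shows "\<exists>V. bounded_clinear_op V \<and> (\<forall>y. f (V y) = y)"
proof -
  have f_inj: "a = b" if "f a = f b" for a b
  proof -
    have "f (a - b) = 0"
      using add[of "a - b" b] that by simp
    then have "c * norm (a - b) \<le> 0"
      using below[of "a - b"] by simp
    then show ?thesis
      using c by (simp add: mult_le_0_iff)
  qed
  define V where "V y = (SOME x. f x = y)" for y
  have f_V: "f (V y) = y" for y
    using \<open>surj f\<close> unfolding V_def surj_def by (metis (mono_tags) someI_ex)
  have "bounded_clinear_op V"
  proof (rule bounded_clinear_opI[where K = "1 / c"])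
    show "V (x + y) = V x + V y" for x y
      by (rule f_inj) (simp add: f_V add)
    show "V (cscale a x) = cscale a (V x)" for a x
      by (rule f_inj) (simp add: f_V scale)
    show "norm (V x) \<le> 1 / c * norm x" for x
      using below[of "V x"] c by (simp add: f_V field_simps)
  qed
  then show ?thesis
    using f_V by blast
qed

theorem cscale_minus_small_invertible:
  assumes K: "bounded_clinear_op K" and small: "onorm K < cmod w"
  shows "\<exists>V. bounded_clinear_op V \<and> (\<forall>y. cscale w (V y) - K (V y) = y)"
proof (rule bounded_clinear_op_right_inverse)
  let ?q = "onorm K"
  have K_bound: "norm (K x) \<le> ?q * norm x" for x
    using K by (simp add: onorm bounded_clinear_op_bounded_linear)
  have q: "0 \<le> ?q"
    using K by (simp add: onorm_pos_le bounded_clinear_op_bounded_linear)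
  show "(cmod w - ?q) * norm x \<le> norm (cscale w x - K x)" for x
    using norm_triangle_ineq2[of "cscale w x" "K x"] K_bound[of x]
    by (simp add: norm_cscale algebra_simps)
  show "cmod w - ?q > 0"
    using small by simp
  have "\<exists>x. cscale w x - K x = y" for y
  proof -
    define g where "g x = cscale (1 / w) (y + K x)" for x
    have "dist (g x) (g x') \<le> (?q / cmod w) * dist x x'" for x x'
    proof -
      have "dist (g x) (g x') = norm (K (x - x')) / cmod w"
        by (simp add: g_def dist_norm norm_cscale norm_divide bounded_clinear_op_apply_diff[OF K]
            cscale_diff_right[symmetric])
      then show ?thesis
        using K_bound[of "x - x'"] by (simp add: dist_norm divide_right_mono)
    qed
    moreover have "?q / cmod w < 1"
      using small q by (simp add: divide_less_eq)
    ultimately obtain x where "g x = x"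
      using banach_fix_type[of "?q / cmod w" g] q by auto
    moreover have "w \<noteq> 0"
      using small q by auto
    then have "cscale w (g x) = y + K x"
      by (simp add: g_def cscale_mult[symmetric])
    ultimately have "y + K x = cscale w x"
      by simp
    then show ?thesis
      by (metis add_diff_cancel_right')
  qed
  then show "surj (\<lambda>x. cscale w x - K x)"
    unfolding surj_def by (metis (no_types))
  show "cscale w (x + y) - K (x + y) = (cscale w x - K x) + (cscale w y - K y)" for x y
    by (simp add: bounded_clinear_op_apply_add[OF K] cscale_add_right)
  show "cscale w (cscale c x) - K (cscale c x) = cscale c (cscale w x - K x)" for c x
    by (simp add: bounded_clinear_op_apply_cscale[OF K] cscale_diff_right cscale_commute)
qed

section \<open>Strongly continuous semigroups and their generators\<close>

lemma gen_domI:
  "((\<lambda>h. (1 / h) *\<^sub>R (T h x - x)) \<longlongrightarrow> y) (at_right 0) \<Longrightarrow> x \<in> gen_dom T"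
  by (auto simp: gen_dom_def)

lemma gen_eqI:
  "((\<lambda>h. (1 / h) *\<^sub>R (T h x - x)) \<longlongrightarrow> y) (at_right 0) \<Longrightarrow> gen T x = y"
  unfolding gen_def by (rule tendsto_Lim) simp_all

lemma gen_tendsto:
  "x \<in> gen_dom T \<Longrightarrow> ((\<lambda>h. (1 / h) *\<^sub>R (T h x - x)) \<longlongrightarrow> gen T x) (at_right 0)"
  unfolding gen_dom_def using gen_eqI by blast

lemma gen_commuting_bounded_linear:
  assumes lin: "bounded_linear f" and comm: "\<And>h x. h > 0 \<Longrightarrow> T h (f x) = f (T h x)"
    and x: "x \<in> gen_dom T"
  shows "f x \<in> gen_dom T" and "gen T (f x) = f (gen T x)"
proof -
  have "((\<lambda>h. f ((1 / h) *\<^sub>R (T h x - x))) \<longlongrightarrow> f (gen T x)) (at_right 0)"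
    by (intro bounded_linear.tendsto[OF lin] gen_tendsto x)
  moreover have "eventually (\<lambda>h. f ((1 / h) *\<^sub>R (T h x - x)) = (1 / h) *\<^sub>R (T h (f x) - f x)) (at_right 0)"
    using eventually_at_right_less by eventually_elim (use lin comm in \<open>simp add: linear_simps\<close>)
  ultimately have "((\<lambda>h. (1 / h) *\<^sub>R (T h (f x) - f x)) \<longlongrightarrow> f (gen T x)) (at_right 0)"
    by (rule Lim_transform_eventually)
  then show "f x \<in> gen_dom T" and "gen T (f x) = f (gen T x)"
    by (simp_all add: gen_domI gen_eqI)
qed

locale strongly_continuous_semigroup =
  fixes T :: "real \<Rightarrow> 'a::complex_banach \<Rightarrow> 'a"
  assumes C0: "C0_semigroup T"
begin

abbreviation D :: "'a set" where "D \<equiv> gen_dom T"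
abbreviation G :: "'a \<Rightarrow> 'a" where "G \<equiv> gen T"

lemma bounded_clinear_op_T: "t \<ge> 0 \<Longrightarrow> bounded_clinear_op (T t)"
  using C0 by (simp add: C0_semigroup_def)

lemma bounded_linear_T: "t \<ge> 0 \<Longrightarrow> bounded_linear (T t)"
  using bounded_clinear_op_T bounded_clinear_op_bounded_linear by blast

lemma T_0 [simp]: "T 0 x = x"
  using C0 by (simp add: C0_semigroup_def)

lemma T_add: "s \<ge> 0 \<Longrightarrow> t \<ge> 0 \<Longrightarrow> T (s + t) x = T s (T t x)"
  using C0 by (simp add: C0_semigroup_def)

lemma T_commute: "s \<ge> 0 \<Longrightarrow> t \<ge> 0 \<Longrightarrow> T s (T t x) = T t (T s x)"
  by (metis T_add add.commute)

lemma T_small_near_0: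
  assumes "e > 0"
  shows "\<exists>d>0. \<forall>h. 0 \<le> h \<and> h < d \<longrightarrow> norm (T h x - x) < e"
proof -
  have "eventually (\<lambda>t. dist (T t x) x < e) (at_right 0)"
    using C0 assms tendstoD unfolding C0_semigroup_def by blast
  then obtain d where "d > 0" and "\<And>h. 0 < h \<Longrightarrow> h < d \<Longrightarrow> norm (T h x - x) < e"
    unfolding eventually_at_right_field by (auto simp: dist_norm)
  then show ?thesis
    using assms by (metis T_0 diff_self norm_zero order_le_less)
qed

lemma T_tendsto_sequentially:
  assumes "\<And>n. h n \<ge> 0" and "h \<longlonglongrightarrow> 0"
  shows "(\<lambda>n. T (h n) x) \<longlonglongrightarrow> x"
proof (rule LIMSEQ_I)
  fix e :: real
  assume "e > 0"
  then obtain d where d: "d > 0" "\<forall>h. 0 \<le> h \<and> h < d \<longrightarrow> norm (T h x - x) < e"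
    using T_small_near_0 by blast
  obtain N where "\<forall>n\<ge>N. norm (h n) < d"
    using LIMSEQ_D[OF assms(2) \<open>d > 0\<close>] by auto
  then show "\<exists>N. \<forall>n\<ge>N. norm (T (h n) x - x) < e"
    using d assms(1) by auto
qed

lemma T_bounded_near_0: "\<exists>d>0. \<exists>M. \<forall>s x. 0 \<le> s \<and> s \<le> d \<longrightarrow> norm (T s x) \<le> M * norm x"
proof (rule ccontr)
  assume "\<not> ?thesis"
  then have "\<exists>s x. 0 \<le> s \<and> s \<le> inverse (real (Suc n)) \<and> norm (T s x) > real n * norm x" for n
    by (auto simp: not_le)
  then obtain h xs where h: "\<And>n. 0 \<le> h n" "\<And>n. h n \<le> inverse (real (Suc n))"
    and xs: "\<And>n. norm (T (h n) (xs n)) > real n * norm (xs n)"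
    by metis
  have "h \<longlonglongrightarrow> 0"
    using h by (intro tendsto_sandwich[OF _ _ tendsto_const LIMSEQ_inverse_real_of_nat]) auto
  then have "bounded (range (\<lambda>n. T (h n) x))" for x
    using T_tendsto_sequentially h(1) convergent_imp_bounded by blast
  then have "\<exists>C. \<forall>n. norm (T (h n) x) \<le> C" for x
    unfolding bounded_iff by auto
  then obtain C where C: "\<And>n x. norm (T (h n) x) \<le> C * norm x"
    using uniform_boundedness[of "\<lambda>n. T (h n)"] bounded_linear_T h(1) by blast
  obtain n :: nat where "C < real n"
    using reals_Archimedean2 by blast
  then have "C * norm (xs n) \<le> real n * norm (xs n)"
    by (intro mult_right_mono) auto
  then show False
    using xs[of n] C[of n "xs n"] by linarith
qed

lemma T_bounded_on_interval: "\<exists>M\<ge>1. \<forall>s x. 0 \<le> s \<and> s \<le> \<tau> \<longrightarrow> norm (T s x) \<le> M * norm x"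
proof -
  obtain d M0 where d: "d > 0" and M0: "\<And>s x. 0 \<le> s \<Longrightarrow> s \<le> d \<Longrightarrow> norm (T s x) \<le> M0 * norm x"
    using T_bounded_near_0 by blast
  define M where "M = max 1 M0"
  have M: "M \<ge> 1"
    by (simp add: M_def)
  have M_bound: "norm (T s x) \<le> M * norm x" if "0 \<le> s" "s \<le> d" for s x
    using M0[OF that, of x] by (smt (verit) M_def mult_right_mono norm_ge_zero)
  have "norm (T s x) \<le> M ^ Suc k * norm x" if "0 \<le> s" "s \<le> real (Suc k) * d" for k s x
    using that
  proof (induction k arbitrary: s x)
    case (Suc k)
    show ?case
    proof (cases "s \<le> d")
      case True
      have "M * norm x \<le> M ^ Suc (Suc k) * norm x"
        using M by (intro mult_right_mono) (auto simp: power_increasing[of 1 "Suc (Suc k)" M, simplified])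
      then show ?thesis
        using M_bound[OF Suc.prems(1) True, of x] by linarith
    next
      case False
      then have "T s x = T d (T (s - d) x)"
        using T_add[of d "s - d" x] d by simp
      moreover have "norm (T (s - d) x) \<le> M ^ Suc k * norm x"
        using Suc False by (auto simp: algebra_simps)
      ultimately show ?thesis
        using M_bound[of d "T (s - d) x"] d M by (smt (verit) mult_left_mono mult.assoc power_Suc)
    qed
  qed (use M_bound in simp)
  moreover obtain k :: nat where "\<tau> / d \<le> real k"
    using real_arch_simple by blast
  then have "\<tau> \<le> real (Suc k) * d"
    using d by (simp add: divide_le_eq algebra_simps)
  moreover have "M ^ Suc k \<ge> 1"
    using M by (rule one_le_power)
  ultimately show ?thesis
    by (meson order_trans)
qed

lemma T_continuous_on: "continuous_on {0..\<tau>} (\<lambda>s. T s x)"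
proof -
  obtain M where M1: "M \<ge> 1" and M: "\<forall>s x. 0 \<le> s \<and> s \<le> \<tau> \<longrightarrow> norm (T s x) \<le> M * norm x"
    using T_bounded_on_interval by blast
  have lipschitz: "norm (T u x - T s x) \<le> M * norm (T \<bar>u - s\<bar> x - x)"
    if "s \<in> {0..\<tau>}" "u \<in> {0..\<tau>}" for s u
  proof (cases "s \<le> u")
    case True
    then have "T u x - T s x = T s (T (u - s) x - x)"
      using T_add[of s "u - s" x] that by (simp add: linear_simps bounded_linear_T)
    then show ?thesis
      using M that True by simp
  next
    case False
    then have "T s x - T u x = T u (T (s - u) x - x)"
      using T_add[of u "s - u" x] that by (simp add: linear_simps bounded_linear_T)
    then show ?thesis
      using M that False by (metis abs_of_nonneg abs_minus_commute atLeastAtMost_iff diff_ge_0_iff_ge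
          nle_le norm_minus_commute)
  qed
  show ?thesis
    unfolding continuous_on_iff
  proof (intro ballI allI impI)
    fix s e
    assume s: "s \<in> {0..\<tau>}" and "(e::real) > 0"
    then obtain d where d: "d > 0" "\<forall>h. 0 \<le> h \<and> h < d \<longrightarrow> norm (T h x - x) < e / M"
      using T_small_near_0[of "e / M" x] M1 by auto
    have "dist (T u x) (T s x) < e" if "u \<in> {0..\<tau>}" "dist u s < d" for u
    proof -
      have "norm (T u x - T s x) < M * (e / M)"
        using lipschitz[OF s that(1)] d that M1
        by (smt (verit) abs_ge_zero dist_real_def mult_strict_left_mono)
      then show ?thesis
        using M1 by (simp add: dist_norm)
    qed
    then show "\<exists>d>0. \<forall>u\<in>{0..\<tau>}. dist u s < d \<longrightarrow> dist (T u x) (T s x) < e"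
      using d(1) by blast
  qed
qed

lemma gen_add:
  assumes x: "x \<in> D" and y: "y \<in> D"
  shows "x + y \<in> D" and "G (x + y) = G x + G y"
proof -
  have "((\<lambda>h. (1 / h) *\<^sub>R (T h x - x) + (1 / h) *\<^sub>R (T h y - y)) \<longlongrightarrow> G x + G y) (at_right 0)"
    by (intro tendsto_add gen_tendsto x y)
  moreover have "eventually (\<lambda>h. (1 / h) *\<^sub>R (T h x - x) + (1 / h) *\<^sub>R (T h y - y)
      = (1 / h) *\<^sub>R (T h (x + y) - (x + y))) (at_right 0)"
    using eventually_at_right_less
    by eventually_elim (simp add: bounded_clinear_op_apply_add bounded_clinear_op_T algebra_simps)
  ultimately have "((\<lambda>h. (1 / h) *\<^sub>R (T h (x + y) - (x + y))) \<longlongrightarrow> G x + G y) (at_right 0)"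
    by (rule Lim_transform_eventually)
  then show "x + y \<in> D" and "G (x + y) = G x + G y"
    by (simp_all add: gen_domI gen_eqI)
qed

lemma gen_cscale:
  assumes "x \<in> D"
  shows "cscale c x \<in> D" and "G (cscale c x) = cscale c (G x)"
  using gen_commuting_bounded_linear[OF bounded_linear_cscale _ assms]
  by (simp_all add: bounded_clinear_op_apply_cscale bounded_clinear_op_T)

lemma gen_diff:
  assumes "x \<in> D" and "y \<in> D"
  shows "x - y \<in> D" and "G (x - y) = G x - G y"
  using gen_add[OF assms(1) gen_cscale(1)[OF assms(2), of "- 1"]] gen_cscale(2)[OF assms(2), of "- 1"]
  by (simp_all add: cscale_minus_left)

lemma zero_in_gen_dom: "0 \<in> D"
  and gen_zero: "G 0 = 0"
proof -
  have "eventually (\<lambda>h. 0 = (1 / h) *\<^sub>R (T h 0 - 0)) (at_right 0)"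
    using eventually_at_right_less
    by eventually_elim (simp add: bounded_clinear_op_apply_zero bounded_clinear_op_T)
  then have "((\<lambda>h. (1 / h) *\<^sub>R (T h 0 - 0)) \<longlongrightarrow> 0) (at_right 0)"
    by (rule Lim_transform_eventually[OF tendsto_const])
  then show "0 \<in> D" and "G 0 = 0"
    by (simp_all add: gen_domI gen_eqI)
qed

lemma gen_T:
  assumes "x \<in> D" and "s \<ge> 0"
  shows "T s x \<in> D" and "G (T s x) = T s (G x)"
  using gen_commuting_bounded_linear[OF bounded_linear_T[OF assms(2)] _ assms(1)] T_commute assms(2)
  by auto

lemma gen_remainder_small:
  assumes x: "x \<in> D" and e: "e > 0"
  shows "\<exists>d>0. \<forall>h. 0 < h \<and> h < d \<longrightarrow> norm (T h x - x - h *\<^sub>R G x) \<le> e * h"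
proof -
  obtain d where d: "d > 0" "\<And>h. 0 < h \<Longrightarrow> h < d \<Longrightarrow> dist ((1 / h) *\<^sub>R (T h x - x)) (G x) < e"
    using tendstoD[OF gen_tendsto[OF x] e] unfolding eventually_at_right_field by auto
  have "norm (T h x - x - h *\<^sub>R G x) \<le> e * h" if h: "0 < h" "h < d" for h
  proof -
    have "T h x - x - h *\<^sub>R G x = h *\<^sub>R ((1 / h) *\<^sub>R (T h x - x) - G x)"
      using h by (simp add: algebra_simps)
    then have "norm (T h x - x - h *\<^sub>R G x) = h * dist ((1 / h) *\<^sub>R (T h x - x)) (G x)"
      using h by (simp add: dist_norm)
    then show ?thesis
      using d(2)[OF h] h by (simp add: mult.commute)
  qed
  then show ?thesis
    using d(1) by blast
qed

lemma T_has_vector_derivative: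
  assumes x: "x \<in> D" and s: "0 \<le> s" "s \<le> \<tau>"
  shows "((\<lambda>u. T u x) has_vector_derivative T s (G x)) (at s within {0..\<tau>})"
  unfolding has_vector_derivative_def has_derivative_within_alt
proof (intro conjI allI impI bounded_linear_scaleR_left)
  fix e :: real
  assume e: "e > 0"
  obtain M where M1: "M \<ge> 1" and M: "\<forall>s x. 0 \<le> s \<and> s \<le> \<tau> \<longrightarrow> norm (T s x) \<le> M * norm x"
    using T_bounded_on_interval by blast
  obtain d1 where d1: "d1 > 0" "\<And>h. 0 < h \<Longrightarrow> h < d1 \<Longrightarrow> norm (T h x - x - h *\<^sub>R G x) \<le> e / (2 * M) * h"
    using gen_remainder_small[OF x, of "e / (2 * M)"] e M1 by auto
  have remainder: "norm (T v (T h x - x - h *\<^sub>R G x)) \<le> e / 2 * h"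
    if "v \<in> {0..\<tau>}" "0 < h" "h < d1" for v h
  proof -
    have "norm (T v (T h x - x - h *\<^sub>R G x)) \<le> M * (e / (2 * M) * h)"
      using M d1(2)[OF that(2,3)] M1 that(1) by (smt (verit) atLeastAtMost_iff mult_left_mono)
    then show ?thesis
      using M1 by (simp add: field_simps)
  qed
  obtain d2 where d2: "d2 > 0" "\<And>u. u \<in> {0..\<tau>} \<Longrightarrow> dist u s < d2 \<Longrightarrow> dist (T u (G x)) (T s (G x)) < e / 2"
    using T_continuous_on[of \<tau> "G x"] s e unfolding continuous_on_iff by (metis atLeastAtMost_iff half_gt_zero)
  have "norm (T u x - T s x - (u - s) *\<^sub>R T s (G x)) \<le> e * norm (u - s)"
    if u: "u \<in> {0..\<tau>}" and ud: "norm (u - s) < min d1 d2" for u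
  proof -
    consider "u = s" | "s < u" | "u < s"
      by linarith
    then show ?thesis
    proof cases
      case 2
      have "norm (T u x - T s x - (u - s) *\<^sub>R T s (G x))
          = norm (T s (T (u - s) x - x - (u - s) *\<^sub>R G x))"
        using T_add[of s "u - s" x] 2 s by (simp add: linear_simps bounded_linear_T)
      also have "\<dots> \<le> e / 2 * (u - s)"
        using remainder[of s "u - s"] 2 s ud by simp
      also have "\<dots> \<le> e * norm (u - s)"
        using e 2 by simp
      finally show ?thesis .
    next
      case 3
      have "T u x - T s x - (u - s) *\<^sub>R T s (G x)
          = (s - u) *\<^sub>R (T s (G x) - T u (G x)) - T u (T (s - u) x - x - (s - u) *\<^sub>R G x)"
        using T_add[of u "s - u" x] 3 u by (simp add: linear_simps bounded_linear_T algebra_simps)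
      then have "norm (T u x - T s x - (u - s) *\<^sub>R T s (G x))
          \<le> norm ((s - u) *\<^sub>R (T s (G x) - T u (G x))) + norm (T u (T (s - u) x - x - (s - u) *\<^sub>R G x))"
        by (simp only: norm_triangle_ineq4)
      also have "\<dots> \<le> e / 2 * (s - u) + e / 2 * (s - u)"
        using d2(2)[OF u] ud 3 remainder[OF u, of "s - u"]
        by (intro add_mono) (simp_all add: dist_norm norm_minus_commute mult.commute)
      also have "\<dots> = e * norm (u - s)"
        using 3 by simp
      finally show ?thesis .
    qed simp
  qed
  then show "\<exists>d>0. \<forall>u\<in>{0..\<tau>}. norm (u - s) < d \<longrightarrow>
      norm (T u x - T s x - (u - s) *\<^sub>R T s (G x)) \<le> e * norm (u - s)"
    using d1(1) d2(1) by (intro exI[of _ "min d1 d2"]) auto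
qed

definition exp_convolution :: "complex \<Rightarrow> real \<Rightarrow> 'a \<Rightarrow> 'a" where
  "exp_convolution \<mu> t y = integral {0..t} (\<lambda>s. cscale (exp (\<mu> * of_real (t - s))) (T s y))"

lemma exp_convolution_has_integral:
  "((\<lambda>s. cscale (exp (\<mu> * of_real (t - s))) (T s y)) has_integral exp_convolution \<mu> t y) {0..t}"
  unfolding exp_convolution_def
  by (intro integrable_integral integrable_continuous_real continuous_intros T_continuous_on
      bounded_bilinear.continuous_on[OF bounded_bilinear_cscale])

lemma exp_convolution_add:
  "exp_convolution \<mu> t (y + z) = exp_convolution \<mu> t y + exp_convolution \<mu> t z"
proof (rule has_integral_unique[OF exp_convolution_has_integral])
  show "((\<lambda>s. cscale (exp (\<mu> * of_real (t - s))) (T s (y + z))) has_integral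
      exp_convolution \<mu> t y + exp_convolution \<mu> t z) {0..t}"
    using has_integral_add[OF exp_convolution_has_integral exp_convolution_has_integral]
    by (rule has_integral_eq[rotated])
      (simp add: bounded_clinear_op_apply_add bounded_clinear_op_T cscale_add_right)
qed

lemma exp_convolution_commute:
  assumes K: "bounded_clinear_op K" and comm: "\<And>s y. s \<ge> 0 \<Longrightarrow> K (T s y) = T s (K y)"
  shows "K (exp_convolution \<mu> t y) = exp_convolution \<mu> t (K y)"
proof (rule has_integral_unique[OF _ exp_convolution_has_integral])
  show "((\<lambda>s. cscale (exp (\<mu> * of_real (t - s))) (T s (K y))) has_integral
      K (exp_convolution \<mu> t y)) {0..t}"
    using has_integral_linear[OF exp_convolution_has_integral bounded_clinear_op_bounded_linear[OF K]]
    by (rule has_integral_eq[rotated]) (simp add: comm bounded_clinear_op_apply_cscale[OF K])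
qed

lemma exp_convolution_cscale: "exp_convolution \<mu> t (cscale c y) = cscale c (exp_convolution \<mu> t y)"
  using exp_convolution_commute[OF bounded_clinear_op_cscale[OF bounded_clinear_op_ident]]
  by (simp add: bounded_clinear_op_apply_cscale bounded_clinear_op_T)

lemma exp_convolution_bound:
  assumes t: "t \<ge> 0"
  shows "\<exists>C. \<forall>y. norm (exp_convolution \<mu> t y) \<le> C * norm y"
proof -
  obtain M where M1: "M \<ge> 1" and M: "\<forall>s x. 0 \<le> s \<and> s \<le> t \<longrightarrow> norm (T s x) \<le> M * norm x"
    using T_bounded_on_interval by blast
  have "norm (exp_convolution \<mu> t y) \<le> (exp (cmod \<mu> * t) * M * t) * norm y" for y
  proof -
    have integrand: "norm (cscale (exp (\<mu> * of_real (t - s))) (T s y)) \<le> exp (cmod \<mu> * t) * M * norm y"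
      if "s \<in> cbox 0 t" for s
    proof -
      have s: "0 \<le> s" "s \<le> t"
        using that by auto
      then have "Re \<mu> * (t - s) \<le> cmod \<mu> * t"
        by (smt (verit) complex_Re_le_cmod mult_left_mono mult_right_mono norm_ge_zero)
      then have "cmod (exp (\<mu> * of_real (t - s))) \<le> exp (cmod \<mu> * t)"
        by (simp add: norm_exp_eq_Re)
      then show ?thesis
        using M s by (simp add: norm_cscale mult.assoc mult_mono)
    qed
    have "norm (exp_convolution \<mu> t y) \<le> exp (cmod \<mu> * t) * M * norm y * Henstock_Kurzweil_Integration.content (cbox 0 t)"
      using exp_convolution_has_integral M1 integrand
      by (intro has_integral_bound[where f = "\<lambda>s. cscale (exp (\<mu> * of_real (t - s))) (T s y)"])
        (simp_all add: cbox_interval)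
    then show ?thesis
      using t by (simp add: mult_ac)
  qed
  then show ?thesis
    by blast
qed

lemma bounded_clinear_op_exp_convolution: "t \<ge> 0 \<Longrightarrow> bounded_clinear_op (exp_convolution \<mu> t)"
  using exp_convolution_bound by (metis bounded_clinear_opI exp_convolution_add exp_convolution_cscale)

definition gen_shift :: "complex \<Rightarrow> 'a \<Rightarrow> 'a" where
  "gen_shift \<mu> x = cscale \<mu> x - G x"

lemma gen_shift_add: "x \<in> D \<Longrightarrow> y \<in> D \<Longrightarrow> gen_shift \<mu> (x + y) = gen_shift \<mu> x + gen_shift \<mu> y"
  by (simp add: gen_shift_def gen_add cscale_add_right algebra_simps)

lemma gen_shift_diff: "x \<in> D \<Longrightarrow> y \<in> D \<Longrightarrow> gen_shift \<mu> (x - y) = gen_shift \<mu> x - gen_shift \<mu> y"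
  by (simp add: gen_shift_def gen_diff cscale_diff_right algebra_simps)

lemma gen_shift_cscale: "x \<in> D \<Longrightarrow> gen_shift \<mu> (cscale c x) = cscale c (gen_shift \<mu> x)"
  by (simp add: gen_shift_def gen_cscale cscale_diff_right cscale_commute)

lemma gen_shift_zero: "gen_shift \<mu> 0 = 0"
  by (simp add: gen_shift_def gen_zero zero_in_gen_dom)

lemma exp_convolution_gen_shift:
  assumes t: "t \<ge> 0" and x: "x \<in> D"
  shows "exp_convolution \<mu> t (gen_shift \<mu> x) = cscale (exp (\<mu> * of_real t)) x - T t x"
proof -
  define f where "f s = cscale (exp (\<mu> * of_real (t - s))) (T s x)" for s
  have f_deriv: "(f has_vector_derivative
      - cscale (exp (\<mu> * of_real (t - s))) (T s (cscale \<mu> x - G x))) (at s within {0..t})"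
    if s: "s \<in> {0..t}" for s
  proof -
    have "((\<lambda>z. exp (\<mu> * (of_real t - z))) has_field_derivative - \<mu> * exp (\<mu> * (of_real t - of_real s)))
        (at (of_real s))"
      by (auto intro!: derivative_eq_intros)
    then have "((\<lambda>s. exp (\<mu> * of_real (t - s))) has_vector_derivative - \<mu> * exp (\<mu> * of_real (t - s)))
        (at s within {0..t})"
      using has_vector_derivative_real_field by fastforce
    from bounded_bilinear.has_vector_derivative[OF bounded_bilinear_cscale this
        T_has_vector_derivative[OF x, of s t]]
    show ?thesis
      unfolding f_def using s by (simp add: bounded_clinear_op_apply_diff bounded_clinear_op_apply_cscale
          bounded_clinear_op_T cscale_diff_right cscale_minus_left cscale_mult[symmetric] mult.commute)
  qed
  have "((\<lambda>s. - cscale (exp (\<mu> * of_real (t - s))) (T s (cscale \<mu> x - G x))) has_integral f t - f 0) {0..t}"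
    by (rule fundamental_theorem_of_calculus[OF t f_deriv])
  from has_integral_neg[OF this] show ?thesis
    by (intro has_integral_unique[OF exp_convolution_has_integral]) (simp add: f_def gen_shift_def)
qed

end

section \<open>Invertibility of \<mu> - G on the closed right half-plane\<close>

locale semigroup_resolvent = strongly_continuous_semigroup +
  fixes \<eta> :: complex
  assumes \<eta>_resolvent: "\<eta> \<in> resolvent_set (gen_dom T) (gen T)"
begin

abbreviation R :: "'a \<Rightarrow> 'a" where "R \<equiv> resolvent D G \<eta>"

lemma R_in_dom: "R y \<in> D"
  using \<eta>_resolvent by (rule resolvent_in_dom)

lemma gen_shift_R: "gen_shift \<eta> (R y) = y"
  unfolding gen_shift_def using \<eta>_resolvent by (rule resolvent_right_inverse)

lemma R_gen_shift: "x \<in> D \<Longrightarrow> R (gen_shift \<eta> x) = x"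
  unfolding gen_shift_def using \<eta>_resolvent by (rule resolvent_left_inverse)

lemma bounded_clinear_op_R: "bounded_clinear_op R"
  using \<eta>_resolvent by (rule resolvent_bounded_clinear_op)

lemma G_R: "G (R y) = cscale \<eta> (R y) - y"
  using gen_shift_R[of y] by (simp add: gen_shift_def algebra_simps)

lemma gen_shift_R_eq: "gen_shift \<mu> (R y) = cscale (\<mu> - \<eta>) (R y) + y"
  by (simp add: gen_shift_def G_R cscale_diff_left)

lemma R_T_commute:
  assumes "s \<ge> 0"
  shows "R (T s y) = T s (R y)"
proof -
  have "gen_shift \<eta> (T s (R y)) = T s (gen_shift \<eta> (R y))"
    using gen_T[OF R_in_dom assms] assms
    by (simp add: gen_shift_def bounded_clinear_op_apply_diff bounded_clinear_op_apply_cscale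
        bounded_clinear_op_T)
  then have "R (T s y) = R (gen_shift \<eta> (T s (R y)))"
    by (simp add: gen_shift_R)
  also have "\<dots> = T s (R y)"
    using R_gen_shift[OF gen_T(1)[OF R_in_dom assms]] .
  finally show ?thesis .
qed

lemma exp_convolution_in_dom_gen_shift:
  assumes t: "t \<ge> 0"
  shows "exp_convolution \<mu> t y \<in> D"
    and "gen_shift \<mu> (exp_convolution \<mu> t y) = cscale (exp (\<mu> * of_real t)) y - T t y"
proof -
  \<comment> \<open>Apply exp_convolution_gen_shift to R y, which lies in D, and commute R past the integral.\<close>
  let ?B = "exp_convolution \<mu> t" and ?e = "exp (\<mu> * of_real t)"
  have B: "bounded_clinear_op ?B"
    using t by (rule bounded_clinear_op_exp_convolution)
  have R_B: "R (?B z) = ?B (R z)" for z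
    using exp_convolution_commute[OF bounded_clinear_op_R R_T_commute] .
  have "?B (gen_shift \<mu> (R y)) = cscale ?e (R y) - T t (R y)"
    using exp_convolution_gen_shift[OF t R_in_dom] .
  then have "cscale (\<mu> - \<eta>) (R (?B y)) + ?B y = R (cscale ?e y - T t y)"
    by (simp add: gen_shift_R_eq R_B bounded_clinear_op_apply_add[OF B] bounded_clinear_op_apply_cscale[OF B]
        bounded_clinear_op_apply_diff[OF bounded_clinear_op_R]
        bounded_clinear_op_apply_cscale[OF bounded_clinear_op_R] R_T_commute[OF t])
  then have B_eq: "?B y = R (cscale ?e y - T t y - cscale (\<mu> - \<eta>) (?B y))"
    by (simp add: bounded_clinear_op_apply_diff[OF bounded_clinear_op_R]
        bounded_clinear_op_apply_add[OF bounded_clinear_op_R]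
        bounded_clinear_op_apply_cscale[OF bounded_clinear_op_R] algebra_simps)
  then show "?B y \<in> D"
    by (metis R_in_dom)
  have "gen_shift \<eta> (?B y) = cscale ?e y - T t y - cscale (\<mu> - \<eta>) (?B y)"
    by (subst B_eq) (rule gen_shift_R)
  then show "gen_shift \<mu> (?B y) = cscale ?e y - T t y"
    by (simp add: gen_shift_def cscale_diff_left algebra_simps)
qed

text \<open>With the paper's generator A = -G, the operator AR below is A(\<eta> + A)^(-1).\<close>

definition AR :: "'a \<Rightarrow> 'a" where
  "AR y = y - cscale \<eta> (R y)"

lemma bounded_clinear_op_AR: "bounded_clinear_op AR"
  unfolding AR_def[abs_def]
  by (rule bounded_clinear_op_diff[OF bounded_clinear_op_ident bounded_clinear_op_cscale[OF bounded_clinear_op_R]])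

lemma neg_G_R: "- G (R y) = AR y"
  by (simp add: G_R AR_def)

lemma AR_funpow_R_commute: "AR ((R ^^ k) y) = (R ^^ k) (AR y)"
proof (induction k arbitrary: y)
  case (Suc k)
  have "AR (R y) = R (AR y)" for y
    by (simp add: AR_def bounded_clinear_op_apply_diff[OF bounded_clinear_op_R]
        bounded_clinear_op_apply_cscale[OF bounded_clinear_op_R])
  then show ?case
    using Suc by (simp add: funpow_Suc_right del: funpow.simps)
qed simp

lemma neg_G_funpow_R_funpow: "((\<lambda>y. - G y) ^^ k) ((R ^^ k) y) = (AR ^^ k) y"
proof (induction k arbitrary: y)
  case (Suc k)
  have "((\<lambda>y. - G y) ^^ Suc k) ((R ^^ Suc k) y) = ((\<lambda>y. - G y) ^^ k) (- G (R ((R ^^ k) y)))"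
    by (simp add: funpow_Suc_right funpow_swap1[of R] del: funpow.simps)
  also have "\<dots> = ((\<lambda>y. - G y) ^^ k) ((R ^^ k) (AR y))"
    by (simp add: neg_G_R AR_funpow_R_commute)
  also have "\<dots> = (AR ^^ Suc k) y"
    by (simp add: Suc.IH funpow_Suc_right del: funpow.simps)
  finally show ?case .
qed simp

definition gen_shift_factor :: "complex \<Rightarrow> complex \<Rightarrow> ('a \<Rightarrow> 'a) \<Rightarrow> bool" where
  "gen_shift_factor \<mu> k K \<longleftrightarrow> bounded_clinear_op K \<and>
     (\<exists>W. bounded_clinear_op W \<and> (\<forall>y. W y \<in> D) \<and> (\<forall>y. cscale k y - K y = gen_shift \<mu> (W y)))"

lemma gen_shift_factor_ident: "gen_shift_factor \<mu> 1 (\<lambda>y. y)"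
  unfolding gen_shift_factor_def
  using bounded_clinear_op_ident bounded_clinear_op_zero zero_in_gen_dom gen_shift_zero
  by (intro conjI exI[of _ "\<lambda>y. 0"]) auto

lemma gen_shift_factor_compose:
  assumes "gen_shift_factor \<mu> k\<^sub>1 K\<^sub>1" and "gen_shift_factor \<mu> k\<^sub>2 K\<^sub>2"
  shows "gen_shift_factor \<mu> (k\<^sub>1 * k\<^sub>2) (\<lambda>y. K\<^sub>1 (K\<^sub>2 y))"
proof -
  obtain W\<^sub>1 where K\<^sub>1: "bounded_clinear_op K\<^sub>1" and W\<^sub>1: "bounded_clinear_op W\<^sub>1" "\<And>y. W\<^sub>1 y \<in> D"
    "\<And>y. cscale k\<^sub>1 y - K\<^sub>1 y = gen_shift \<mu> (W\<^sub>1 y)"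
    using assms(1) unfolding gen_shift_factor_def by blast
  obtain W\<^sub>2 where K\<^sub>2: "bounded_clinear_op K\<^sub>2" and W\<^sub>2: "bounded_clinear_op W\<^sub>2" "\<And>y. W\<^sub>2 y \<in> D"
    "\<And>y. cscale k\<^sub>2 y - K\<^sub>2 y = gen_shift \<mu> (W\<^sub>2 y)"
    using assms(2) unfolding gen_shift_factor_def by blast
  define W where "W y = cscale k\<^sub>1 (W\<^sub>2 y) + W\<^sub>1 (K\<^sub>2 y)" for y
  have "cscale (k\<^sub>1 * k\<^sub>2) y - K\<^sub>1 (K\<^sub>2 y) = gen_shift \<mu> (W y)" for y
  proof -
    have "cscale (k\<^sub>1 * k\<^sub>2) y - K\<^sub>1 (K\<^sub>2 y) = cscale k\<^sub>1 (cscale k\<^sub>2 y - K\<^sub>2 y) + (cscale k\<^sub>1 (K\<^sub>2 y) - K\<^sub>1 (K\<^sub>2 y))"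
      by (simp add: cscale_mult cscale_diff_right)
    also have "\<dots> = gen_shift \<mu> (W y)"
      using W\<^sub>1 W\<^sub>2 by (simp add: W_def gen_shift_add gen_shift_cscale gen_cscale)
    finally show ?thesis .
  qed
  moreover have "bounded_clinear_op W"
    unfolding W_def[abs_def]
    using bounded_clinear_op_add[OF bounded_clinear_op_cscale[OF W\<^sub>2(1)] bounded_clinear_op_compose[OF W\<^sub>1(1) K\<^sub>2]] .
  moreover have "W y \<in> D" for y
    using W\<^sub>1(2) W\<^sub>2(2) by (simp add: W_def gen_add gen_cscale)
  ultimately show ?thesis
    using bounded_clinear_op_compose[OF K\<^sub>1 K\<^sub>2] unfolding gen_shift_factor_def by blast
qed

lemma gen_shift_factor_funpow: "gen_shift_factor \<mu> k K \<Longrightarrow> gen_shift_factor \<mu> (k ^ n) (K ^^ n)"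
  by (induction n) (simp_all add: id_def comp_def gen_shift_factor_ident gen_shift_factor_compose)

lemma gen_shift_factor_R:
  assumes "\<mu> \<noteq> \<eta>"
  shows "gen_shift_factor \<mu> (1 / (\<eta> - \<mu>)) R"
proof -
  let ?r = "1 / (\<eta> - \<mu>)"
  have "cscale ?r y - R y = gen_shift \<mu> (cscale ?r (R y))" for y
  proof -
    have "?r * (\<mu> - \<eta>) = - 1"
      using assms by (simp add: field_simps)
    then have "cscale ?r (cscale (\<mu> - \<eta>) (R y)) = - R y"
      by (metis cscale_mult cscale_minus_left cscale_one)
    moreover have "gen_shift \<mu> (cscale ?r (R y)) = cscale ?r (cscale (\<mu> - \<eta>) (R y)) + cscale ?r y"
      by (simp add: gen_shift_cscale R_in_dom gen_shift_R_eq cscale_add_right)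
    ultimately show ?thesis
      by simp
  qed
  then show ?thesis
    unfolding gen_shift_factor_def using bounded_clinear_op_R R_in_dom gen_cscale(1)
    by (intro conjI exI[of _ "\<lambda>y. cscale ?r (R y)"] bounded_clinear_op_cscale) auto
qed

lemma gen_shift_factor_AR:
  assumes "\<mu> \<noteq> \<eta>"
  shows "gen_shift_factor \<mu> (1 - \<eta> / (\<eta> - \<mu>)) AR"
proof -
  obtain W where W: "bounded_clinear_op W" "\<And>y. W y \<in> D"
    "\<And>y. cscale (1 / (\<eta> - \<mu>)) y - R y = gen_shift \<mu> (W y)"
    using gen_shift_factor_R[OF assms] unfolding gen_shift_factor_def by blast
  have "cscale (1 - \<eta> / (\<eta> - \<mu>)) y - AR y = cscale (- \<eta>) (cscale (1 / (\<eta> - \<mu>)) y - R y)" for y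
    by (simp add: AR_def cscale_diff_left cscale_diff_right cscale_mult[symmetric] cscale_minus_left)
  then have "cscale (1 - \<eta> / (\<eta> - \<mu>)) y - AR y = gen_shift \<mu> (cscale (- \<eta>) (W y))" for y
    using W by (simp only: W(3) gen_shift_cscale)
  then show ?thesis
    unfolding gen_shift_factor_def using bounded_clinear_op_AR W gen_cscale(1)
    by (intro conjI exI[of _ "\<lambda>y. cscale (- \<eta>) (W y)"] bounded_clinear_op_cscale) auto
qed

lemma R_eigenvector:
  assumes "x \<in> D" and "gen_shift \<mu> x = 0" and "\<mu> \<noteq> \<eta>"
  shows "R x = cscale (1 / (\<eta> - \<mu>)) x"
proof -
  have "gen_shift \<eta> x = cscale (\<eta> - \<mu>) x"
    using assms(2) by (simp add: gen_shift_def cscale_diff_left)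
  then have "x = cscale (\<eta> - \<mu>) (R x)"
    using R_gen_shift[OF assms(1)] by (simp add: bounded_clinear_op_apply_cscale[OF bounded_clinear_op_R])
  then have "cscale (1 / (\<eta> - \<mu>)) x = cscale (1 / (\<eta> - \<mu>) * (\<eta> - \<mu>)) (R x)"
    by (metis cscale_mult)
  then show ?thesis
    using assms(3) by simp
qed

lemma T_eigenvector:
  assumes "x \<in> D" and "gen_shift \<mu> x = 0" and "t \<ge> 0"
  shows "T t x = cscale (exp (\<mu> * of_real t)) x"
  using exp_convolution_gen_shift[OF assms(3,1), of \<mu>] assms(2)
    bounded_clinear_op_apply_zero[OF bounded_clinear_op_exp_convolution[OF assms(3)]]
  by simp

lemma AR_eigenvector: "R x = cscale r x \<Longrightarrow> AR x = cscale (1 - \<eta> * r) x"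
  by (simp add: AR_def cscale_diff_left cscale_mult)

lemma gen_shift_right_inverse:
  assumes S: "gen_shift_factor \<mu> c S" and \<mu>: "Re \<mu> \<ge> 0" and t: "t \<ge> 0"
    and small: "onorm (\<lambda>x. T t (S x)) < cmod c"
  shows "\<exists>Z. bounded_clinear_op Z \<and> (\<forall>y. Z y \<in> D \<and> gen_shift \<mu> (Z y) = y)"
proof -
  obtain W where S_bounded: "bounded_clinear_op S" and W: "bounded_clinear_op W" "\<And>y. W y \<in> D"
    "\<And>y. cscale c y - S y = gen_shift \<mu> (W y)"
    using S unfolding gen_shift_factor_def by blast
  define e where "e = exp (\<mu> * of_real t)"
  have "cmod c \<le> cmod (e * c)"
    using \<mu> t by (simp add: e_def norm_mult norm_exp_eq_Re mult_le_cancel_right1)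
  then obtain V where V: "bounded_clinear_op V" "\<And>y. cscale (e * c) (V y) - T t (S (V y)) = y"
    using cscale_minus_small_invertible[of "\<lambda>x. T t (S x)" "e * c"] small
      bounded_clinear_op_compose[OF bounded_clinear_op_T[OF t] S_bounded] by auto
  \<comment> \<open>(\<mu> - G) maps e W to e c - e S and the convolution of S to e S - T t S.\<close>
  define Z where "Z y = cscale e (W (V y)) + exp_convolution \<mu> t (S (V y))" for y
  have "gen_shift \<mu> (Z y) = y" for y
  proof -
    have "gen_shift \<mu> (Z y) = cscale e (cscale c (V y) - S (V y)) + (cscale e (S (V y)) - T t (S (V y)))"
      using W(2) exp_convolution_in_dom_gen_shift[OF t]
      by (simp add: Z_def W(3) gen_shift_add gen_shift_cscale gen_cscale e_def)
    also have "\<dots> = y"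
      by (simp add: V(2) cscale_diff_right cscale_mult[symmetric])
    finally show ?thesis .
  qed
  moreover have "Z y \<in> D" for y
    unfolding Z_def using W(2) exp_convolution_in_dom_gen_shift(1)[OF t] by (simp add: gen_add gen_cscale)
  moreover have "bounded_clinear_op Z"
    unfolding Z_def[abs_def]
    by (intro bounded_clinear_op_add bounded_clinear_op_cscale bounded_clinear_op_compose[OF W(1) V(1)]
        bounded_clinear_op_compose[OF bounded_clinear_op_exp_convolution[OF t]
          bounded_clinear_op_compose[OF S_bounded V(1)]])
  ultimately show ?thesis
    by blast
qed

lemma gen_shift_resolvent_setI:
  assumes Z: "bounded_clinear_op Z" and Z_inverse: "\<And>y. Z y \<in> D \<and> gen_shift \<mu> (Z y) = y"
    and kernel: "\<And>x. x \<in> D \<Longrightarrow> gen_shift \<mu> x = 0 \<Longrightarrow> x = 0"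
  shows "\<mu> \<in> resolvent_set D G"
proof (rule resolvent_setI[OF _ Z])
  show "inj_on (\<lambda>x. cscale \<mu> x - G x) D"
    using kernel by (intro inj_onI) (metis gen_shift_def gen_diff(1) gen_shift_diff eq_iff_diff_eq_0)
qed (use Z_inverse in \<open>simp_all add: gen_shift_def\<close>)

lemma gen_shift_kernel_trivial:
  assumes S: "bounded_clinear_op S" and S_eigen: "\<And>x. x \<in> D \<Longrightarrow> gen_shift \<mu> x = 0 \<Longrightarrow> S x = cscale c x"
    and \<mu>: "Re \<mu> \<ge> 0" and t: "t \<ge> 0" and small: "onorm (\<lambda>x. T t (S x)) < cmod c"
    and x: "x \<in> D" "gen_shift \<mu> x = 0"
  shows "x = 0"
proof -
  have TS: "bounded_linear (\<lambda>x. T t (S x))"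
    using bounded_clinear_op_compose[OF bounded_clinear_op_T[OF t] S] bounded_clinear_op_bounded_linear
    by blast
  have "norm (T t (S x)) = cmod (exp (\<mu> * of_real t) * c) * norm x"
    using T_eigenvector[OF x t] S_eigen[OF x]
    by (simp add: norm_cscale bounded_clinear_op_apply_cscale[OF bounded_clinear_op_T[OF t]]
        cscale_mult[symmetric] mult.commute)
  moreover have "cmod c * norm x \<le> cmod (exp (\<mu> * of_real t) * c) * norm x"
    using \<mu> t by (intro mult_right_mono) (simp_all add: norm_mult norm_exp_eq_Re mult_le_cancel_right1)
  ultimately have "cmod c * norm x \<le> onorm (\<lambda>x. T t (S x)) * norm x"
    using onorm[OF TS, of x] by linarith
  then have "(cmod c - onorm (\<lambda>x. T t (S x))) * norm x \<le> 0"
    by (simp add: algebra_simps)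
  then show ?thesis
    using small by (simp add: mult_le_0_iff)
qed

theorem closed_right_half_plane_in_resolvent_set:
  assumes t: "\<forall>n. t n \<ge> 0"
    and lim: "(\<lambda>n. onorm (\<lambda>x. T (t n) (((\<lambda>y. - G y) ^^ \<alpha>) ((R ^^ (\<alpha> + \<beta>)) x)))) \<longlonglongrightarrow> 0"
    and \<mu>: "Re \<mu> \<ge> 0" "\<mu> \<noteq> 0"
  shows "\<mu> \<in> resolvent_set D G"
proof (cases "\<mu> = \<eta>")
  case False
  define r where "r = 1 / (\<eta> - \<mu>)"
  define c where "c = (1 - \<eta> * r) ^ \<alpha> * r ^ \<beta>"
  define S where "S x = (AR ^^ \<alpha>) ((R ^^ \<beta>) x)" for x
  have S: "gen_shift_factor \<mu> c S"
    unfolding c_def S_def[abs_def] r_def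
    using gen_shift_factor_compose[OF gen_shift_factor_funpow[OF gen_shift_factor_AR[OF False]]
        gen_shift_factor_funpow[OF gen_shift_factor_R[OF False]]]
    by simp
  have S_eigen: "S x = cscale c x" if "x \<in> D" "gen_shift \<mu> x = 0" for x
  proof -
    have "R x = cscale r x"
      using R_eigenvector[OF that False] by (simp add: r_def)
    then show ?thesis
      using funpow_eigenvector[OF bounded_clinear_op_R, of x r \<beta>]
        funpow_eigenvector[OF bounded_clinear_op_AR AR_eigenvector, of x r \<alpha>]
      by (simp add: S_def c_def bounded_clinear_op_apply_cscale[OF bounded_clinear_op_funpow[OF bounded_clinear_op_AR]]
          cscale_mult[symmetric] mult.commute)
  qed
  have "1 - \<eta> * r = - \<mu> / (\<eta> - \<mu>)" and "r \<noteq> 0"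
    using False by (simp_all add: r_def field_simps)
  then have "c \<noteq> 0"
    using \<mu> False by (simp add: c_def)
  moreover have "((\<lambda>y. - G y) ^^ \<alpha>) ((R ^^ (\<alpha> + \<beta>)) x) = S x" for x
    by (simp add: S_def funpow_add neg_G_funpow_R_funpow)
  ultimately have "\<forall>\<^sub>F n in sequentially. onorm (\<lambda>x. T (t n) (S x)) < cmod c"
    using order_tendstoD(2)[OF lim] by simp
  then obtain n where small: "onorm (\<lambda>x. T (t n) (S x)) < cmod c"
    by (auto simp: eventually_sequentially)
  have S_bounded: "bounded_clinear_op S"
    using S by (simp add: gen_shift_factor_def)
  obtain Z where "bounded_clinear_op Z" and "\<And>y. Z y \<in> D \<and> gen_shift \<mu> (Z y) = y"
    using gen_shift_right_inverse[OF S \<mu>(1) _ small] t by blast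
  then show ?thesis
    using gen_shift_kernel_trivial[OF S_bounded S_eigen \<mu>(1) _ small] t
    by (intro gen_shift_resolvent_setI) auto
qed (use \<eta>_resolvent in simp)

end

theorem lemma4p18:
  fixes T :: "real \<Rightarrow> 'a::complex_banach \<Rightarrow> 'a"
    and \<alpha> \<beta> :: nat and \<eta> :: complex and t :: "nat \<Rightarrow> real"
  assumes "C0_semigroup T"
    and "\<eta> \<in> resolvent_set (gen_dom T) (gen T)"
    and "\<forall>n. t n \<ge> 0"
    and "(\<lambda>n. onorm (\<lambda>x. T (t n) (((\<lambda>y. - gen T y) ^^ \<alpha>)
            ((resolvent (gen_dom T) (gen T) \<eta> ^^ (\<alpha> + \<beta>)) x)))) \<longlonglongrightarrow> 0"
  shows "{z. Re z \<le> 0} - {0} \<subseteq> resolvent_set (gen_dom T) (\<lambda>y. - gen T y)"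
proof
  interpret semigroup_resolvent T \<eta>
    using assms(1,2) by unfold_locales
  fix z
  assume "z \<in> {z. Re z \<le> 0} - {0}"
  then have "- z \<in> resolvent_set D G"
    using closed_right_half_plane_in_resolvent_set[OF assms(3,4)] by simp
  then show "z \<in> resolvent_set D (\<lambda>y. - G y)"
    using resolvent_set_uminus by fastforce
qed

end
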